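(* Let two stochastic CA have the same set of states and explicit global functions $F_A$ and $F_B$. If $S_{F_A}=S_{F_B}$ then $N_{F_A}=N_{F_B}$.
   Context: A stochastic CA is $(Q,R,V,V',f)$ with $Q$ finite states, $R$ finite random symbols, $V=\{v_1,\dots,v_r\}$, $V'=\{v'_1,\dots,v'_{r'}\}$ finite subsets of $\mathbb{Z}$, $f:Q^r\times R^{r'}\to Q$; explicit global function $F(c,s)_z=f((c_{z+v_1},\dots,c_{z+v_r}),(s_{z+v'_1},\dots,s_{z+v'_{r'}}))$. The non-deterministic global function is $N_F(c)=\{F(c,s):s\in R^{\mathbb{Z}}\}$. The stochastic global function is $S_F(c)([u]_z)=\nu_R\{s:F(c,s)\in[u]_z\}$, where $\nu_R$ is the uniform Bernoulli measure on $R^{\mathbb{Z}}$ and $[u]_z=\{c:c_{z+x}=u_x,0\le x<|u|\}$. *)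

theory Defs
  imports "HOL-Probability.Probability"
begin

text \<open>A stochastic CA (Q,R,V,V',f): states are a finite type 'q, random symbols a finite
(hence nonempty) type 'r, the neighbourhoods V = [v_1,...,v_r] and V' = [v'_1,...,v'_r']
are lists of distinct integers, and the local rule f takes the list of r neighbouring
states and the list of r' neighbouring random symbols.\<close>

definition stoch_CA :: "int list \<Rightarrow> int list \<Rightarrow> ('q::finite list \<Rightarrow> 'r::finite list \<Rightarrow> 'q) \<Rightarrow> bool" where
  "stoch_CA V V' f \<longleftrightarrow> distinct V \<and> distinct V'"

definition explicit_global ::
  "int list \<Rightarrow> int list \<Rightarrow> ('q list \<Rightarrow> 'r list \<Rightarrow> 'q) \<Rightarrow> (int \<Rightarrow> 'q) \<Rightarrow> (int \<Rightarrow> 'r) \<Rightarrow> (int \<Rightarrow> 'q)" where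
  "explicit_global V V' f c s = (\<lambda>z. f (map (\<lambda>v. c (z + v)) V) (map (\<lambda>v. s (z + v)) V'))"

definition nondet_global ::
  "int list \<Rightarrow> int list \<Rightarrow> ('q list \<Rightarrow> 'r list \<Rightarrow> 'q) \<Rightarrow> (int \<Rightarrow> 'q) \<Rightarrow> (int \<Rightarrow> 'q) set" where
  "nondet_global V V' f c = {explicit_global V V' f c s | s. True}"

definition bernoulli_unif :: "(int \<Rightarrow> 'r::finite) measure" where
  "bernoulli_unif = (\<Pi>\<^sub>M z\<in>(UNIV::int set). measure_pmf (pmf_of_set (UNIV::'r set)))"

definition cylinder :: "'q list \<Rightarrow> int \<Rightarrow> (int \<Rightarrow> 'q) set" where
  "cylinder u z = {c. \<forall>x < length u. c (z + int x) = u ! x}"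

definition stoch_global ::
  "int list \<Rightarrow> int list \<Rightarrow> ('q list \<Rightarrow> 'r::finite list \<Rightarrow> 'q) \<Rightarrow> (int \<Rightarrow> 'q) \<Rightarrow> 'q list \<Rightarrow> int \<Rightarrow> real" where
  "stoch_global V V' f c u z =
     measure bernoulli_unif {s \<in> space bernoulli_unif. explicit_global V V' f c s \<in> cylinder u z}"

end

theory Submission imports Defs begin

text \<open>An event about F(c,s) \<in> [u]_z depends on only finitely many random symbols, and every
cylinder in R^Z fixing finitely many symbols has positive uniform Bernoulli measure. Hence
S_F(c)([u]_z) > 0 exactly when some s realises u at z, i.e. when N_F(c) meets [u]_z, so
S_A = S_B forces N_A(c) and N_B(c) to meet the same cylinders. Finally N_F(c) is closed:
R^Z is compact in the product of discrete topologies and the sets {s. F(c,s) \<in> [u]_z} are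
closed, so a configuration all of whose central words are realised is realised itself.\<close>

definition window :: "int set \<Rightarrow> (int \<Rightarrow> 'r) \<Rightarrow> (int \<Rightarrow> 'r) set" where
  "window W g = {t. \<forall>j\<in>W. t j = g j}"

definition determined_by :: "int set \<Rightarrow> (int \<Rightarrow> 'r) set \<Rightarrow> bool" where
  "determined_by W S \<longleftrightarrow> (\<forall>s t. (\<forall>j\<in>W. s j = t j) \<longrightarrow> (s \<in> S \<longleftrightarrow> t \<in> S))"

lemma determined_by_Compl: "determined_by W S \<Longrightarrow> determined_by W (- S)"
  by (auto simp: determined_by_def)

lemma determined_by_eq_UN_window: "determined_by W S \<Longrightarrow> S = (\<Union>g\<in>S. window W g)"
  by (auto simp: determined_by_def window_def)

lemma window_subset_if_determined_by: "determined_by W S \<Longrightarrow> g \<in> S \<Longrightarrow> window W g \<subseteq> S"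
  by (auto simp: determined_by_def window_def)

lemma space_bernoulli_unif: "space (bernoulli_unif :: (int \<Rightarrow> 'r::finite) measure) = UNIV"
  by (simp add: bernoulli_unif_def space_PiM)

lemma prob_space_bernoulli_unif: "prob_space (bernoulli_unif :: (int \<Rightarrow> 'r::finite) measure)"
  unfolding bernoulli_unif_def by (rule prob_space_PiM) (simp add: prob_space_measure_pmf)

lemma window_eq_prod_emb:
  "(window W g :: (int \<Rightarrow> 'r::finite) set) =
   prod_emb UNIV (\<lambda>_. measure_pmf (pmf_of_set (UNIV::'r set))) W (PiE W (\<lambda>j. {g j}))"
  by (auto simp: window_def prod_emb_def PiE_iff)

lemma sets_bernoulli_unif_window:
  "finite W \<Longrightarrow> (window W g :: (int \<Rightarrow> 'r::finite) set) \<in> sets bernoulli_unif"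
  unfolding window_eq_prod_emb bernoulli_unif_def by (rule sets_PiM_I) auto

lemma measure_bernoulli_unif_window:
  assumes "finite W"
  shows "measure bernoulli_unif (window W (g :: int \<Rightarrow> 'r::finite)) = (1 / real CARD('r)) ^ card W"
proof -
  have "emeasure bernoulli_unif (window W g) =
        (\<Prod>i\<in>W. emeasure (measure_pmf (pmf_of_set (UNIV::'r set))) {g i})"
    unfolding window_eq_prod_emb bernoulli_unif_def
    by (rule emeasure_PiM_emb) (auto simp: assms prob_space_measure_pmf)
  also have "\<dots> = ennreal ((1 / real CARD('r)) ^ card W)"
    by (simp add: emeasure_pmf_single ennreal_power)
  finally show ?thesis
    by (simp add: measure_def)
qed

lemma sets_bernoulli_unif_determined_by:
  assumes W: "finite W" and S: "determined_by W S"
  shows "(S :: (int \<Rightarrow> 'r::finite) set) \<in> sets bernoulli_unif"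
proof -
  have "S = (\<Union>g\<in>(\<lambda>s. restrict s W) ` S. window W g)"
    using S by (auto simp: determined_by_def window_def)
  moreover have "finite ((\<lambda>s. restrict s W) ` S)"
    by (rule finite_subset[of _ "PiE W (\<lambda>_. UNIV)"]) (auto intro!: finite_PiE W)
  ultimately show ?thesis
    by (metis W sets_bernoulli_unif_window sets.finite_UN)
qed

lemma measure_bernoulli_unif_pos_iff:
  assumes W: "finite W" and S: "determined_by W S"
  shows "measure bernoulli_unif (S :: (int \<Rightarrow> 'r::finite) set) > 0 \<longleftrightarrow> S \<noteq> {}"
proof
  assume "measure bernoulli_unif S > 0"
  then show "S \<noteq> {}" by auto
next
  assume "S \<noteq> {}"
  then obtain g where g: "g \<in> S" by blast
  interpret prob_space "bernoulli_unif :: (int \<Rightarrow> 'r) measure"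
    by (rule prob_space_bernoulli_unif)
  have "0 < measure bernoulli_unif (window W g)"
    by (simp add: measure_bernoulli_unif_window W)
  also have "\<dots> \<le> measure bernoulli_unif S"
    using window_subset_if_determined_by[OF S g] sets_bernoulli_unif_determined_by[OF W S]
    by (rule finite_measure_mono)
  finally show "measure bernoulli_unif S > 0" .
qed

definition prodiscrete :: "(int \<Rightarrow> 'r) topology" where
  "prodiscrete = product_topology (\<lambda>_. discrete_topology UNIV) UNIV"

lemma topspace_prodiscrete: "topspace prodiscrete = UNIV"
  by (simp add: prodiscrete_def)

lemma compact_space_prodiscrete: "compact_space (prodiscrete :: (int \<Rightarrow> 'r::finite) topology)"
  unfolding prodiscrete_def
  by (simp add: compact_space_product_topology compact_space_discrete_topology)

lemma openin_prodiscrete_window: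
  assumes W: "finite W"
  shows "openin prodiscrete (window W g)"
proof -
  have "window W g = PiE UNIV (\<lambda>j. if j \<in> W then {g j} else UNIV)"
    by (auto simp: window_def PiE_iff) (metis singletonD)
  moreover have "openin prodiscrete (PiE UNIV (\<lambda>j. if j \<in> W then {g j} else UNIV))"
    unfolding prodiscrete_def openin_PiE_gen
    by (rule disjI2) (auto intro: finite_subset[OF _ W])
  ultimately show ?thesis by simp
qed

lemma openin_prodiscrete_determined_by:
  "finite W \<Longrightarrow> determined_by W S \<Longrightarrow> openin prodiscrete S"
  by (metis determined_by_eq_UN_window openin_prodiscrete_window openin_Union imageE)

lemma closedin_prodiscrete_determined_by:
  assumes "finite W" and "determined_by W S"
  shows "closedin prodiscrete S"
proof -
  have "openin prodiscrete (- S)"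
    using assms determined_by_Compl openin_prodiscrete_determined_by by blast
  then show ?thesis
    by (simp add: closedin_def topspace_prodiscrete Compl_eq_Diff_UNIV)
qed

lemma explicit_global_preimage_cylinder_determined_by:
  "determined_by ((\<lambda>(x, v). z + int x + v) ` ({..<length u} \<times> set V'))
     {s. explicit_global V V' f c s \<in> cylinder u z}"
  unfolding determined_by_def cylinder_def explicit_global_def
  by (intro allI impI) (simp cong: map_cong)

lemma stoch_global_pos_iff:
  "stoch_global V V' (f :: 'q list \<Rightarrow> 'r::finite list \<Rightarrow> 'q) c u z > 0 \<longleftrightarrow>
   (\<exists>s. explicit_global V V' f c s \<in> cylinder u z)"
proof -
  have "{s \<in> UNIV. explicit_global V V' f c s \<in> cylinder u z} =
        {s. explicit_global V V' f c s \<in> cylinder u z}"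
    by simp
  then show ?thesis
    unfolding stoch_global_def space_bernoulli_unif
    by (simp add: measure_bernoulli_unif_pos_iff[OF _ explicit_global_preimage_cylinder_determined_by])
qed

definition central_word :: "(int \<Rightarrow> 'q) \<Rightarrow> nat \<Rightarrow> 'q list" where
  "central_word y n = map (\<lambda>x. y (- int n + int x)) [0..<2*n]"

lemma cylinder_central_word:
  "cylinder (central_word y n) (- int n) = {c. \<forall>j. - int n \<le> j \<and> j < int n \<longrightarrow> c j = y j}"
proof safe
  fix c j assume c: "c \<in> cylinder (central_word y n) (- int n)"
    and j: "- int n \<le> j" "j < int n"
  have "nat (j + int n) < 2*n" "- int n + int (nat (j + int n)) = j"
    using j by auto
  then show "c j = y j"
    using c by (auto simp: cylinder_def central_word_def)
qed (auto simp: cylinder_def central_word_def)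

lemma in_nondet_global_if_central_words:
  fixes f :: "'q list \<Rightarrow> 'r::finite list \<Rightarrow> 'q"
  assumes words: "\<And>n. \<exists>s. explicit_global V V' f c s \<in> cylinder (central_word y n) (- int n)"
  shows "y \<in> nondet_global V V' f c"
proof -
  define K where "K n = {s. explicit_global V V' f c s \<in> cylinder (central_word y n) (- int n)}" for n
  have K: "K n = {s. \<forall>j. - int n \<le> j \<and> j < int n \<longrightarrow> explicit_global V V' f c s j = y j}" for n
    unfolding K_def cylinder_central_word by simp
  have "(\<Inter>n. K n) \<noteq> {}"
  proof (rule compact_space_imp_nest[OF compact_space_prodiscrete])
    show "closedin prodiscrete (K n)" for n
      unfolding K_def
      by (rule closedin_prodiscrete_determined_by[OF _ explicit_global_preimage_cylinder_determined_by])
         simp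
    show "K n \<noteq> {}" for n
      using words by (auto simp: K_def)
    show "decseq K"
      by (auto simp: decseq_def K)
  qed
  then obtain s where s: "\<And>n. s \<in> K n" by blast
  have "explicit_global V V' f c s = y"
  proof
    fix j
    show "explicit_global V V' f c s j = y j"
      using s[of "nat \<bar>j\<bar> + 1"] unfolding K by (auto dest: spec[of _ j])
  qed
  then show ?thesis
    by (auto simp: nondet_global_def)
qed

lemma nondet_global_mono_if_stoch_global_eq:
  fixes fA :: "'q list \<Rightarrow> 'a::finite list \<Rightarrow> 'q" and fB :: "'q list \<Rightarrow> 'b::finite list \<Rightarrow> 'q"
  assumes eq: "stoch_global VA VA' fA = stoch_global VB VB' fB"
  shows "nondet_global VA VA' fA c \<subseteq> nondet_global VB VB' fB c"
proof
  fix y assume "y \<in> nondet_global VA VA' fA c"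
  then obtain s where "explicit_global VA VA' fA c s = y"
    by (auto simp: nondet_global_def)
  then have "stoch_global VA VA' fA c (central_word y n) (- int n) > 0" for n
    by (auto simp: stoch_global_pos_iff cylinder_central_word)
  then have "\<exists>s. explicit_global VB VB' fB c s \<in> cylinder (central_word y n) (- int n)" for n
    by (simp add: eq stoch_global_pos_iff)
  then show "y \<in> nondet_global VB VB' fB c"
    by (rule in_nondet_global_if_central_words)
qed

theorem fact2:
  fixes VA VA' :: "int list" and fA :: "'q::finite list \<Rightarrow> 'a::finite list \<Rightarrow> 'q"
    and VB VB' :: "int list" and fB :: "'q list \<Rightarrow> 'b::finite list \<Rightarrow> 'q"
  assumes "stoch_CA VA VA' fA" and "stoch_CA VB VB' fB"
    and "stoch_global VA VA' fA = stoch_global VB VB' fB"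
  shows "nondet_global VA VA' fA = nondet_global VB VB' fB"
proof
  fix c
  show "nondet_global VA VA' fA c = nondet_global VB VB' fB c"
    using nondet_global_mono_if_stoch_global_eq[OF assms(3)]
      nondet_global_mono_if_stoch_global_eq[OF assms(3)[symmetric]]
    by (rule subset_antisym)
qed

end
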